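(* There is a bounded open subset $B_G$ of $X_G$ (with the topology induced from $C^1$), with $\phi(t)>0$ for all $\phi\in B_G$ and $t\in[-r,0]$, such that for every $\phi\in X_G$ there exists $t(\phi)\ge 0$ with $S_G(t,\phi)\in B_G$ for all $t\ge t(\phi)$.
   Context: Constants $\beta,\mu,\gamma,a>0$. The function $g:\mathbb{R}\to(0,\infty)$ is continuously differentiable with $0<\inf g(\mathbb{R})\le \sup g(\mathbb{R})<\infty$. The function $v:\mathbb{R}\to\mathbb{R}$ is continuously differentiable with $0<v_0\le v(x)\le v_U$ for all $x$. Fix $r>a/v_0$; $C^1=C^1([-r,0],\mathbb{R})$ with norm $|\phi|_1=\max|\phi|+\max|\phi'|$. Segments: $x_t(s)=x(t+s)$, $s\in[-r,0]$. For $\phi\in C([-r,0],\mathbb{R})$ let $\delta(\phi)$ be the unique $u\in(0,r)$ with $a=\int_{-u}^0 v(\phi(s))\,ds$. Define $G:C^1\to\mathbb{R}$ by $G(\phi)=\beta e^{-\mu\delta(\phi)}\frac{v(\phi(0))}{v(\phi(-\delta(\phi)))}g(\phi(-\delta(\phi)))-\gamma\phi(0)$, and $X_G=\{\phi\in C^1:\phi'(0)=G(\phi)\}$ (a closed $C^1$-submanifold of codimension 1 of $C^1$). Each $\phi\in X_G$ determines a unique maximal continuously differentiable solution $x^\phi$ of $x'(t)=G(x_t)$ for $t>0$, $x_0=\phi$, which exists for all $t\ge 0$, and $S_G(t,\phi)=x^\phi_t$ defines the associated semiflow on $X_G$. *)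

theory Defs
  imports "HOL-Analysis.Analysis"
begin

text \<open>Elements of C^1([-r,0],R) are represented by functions real => real;
only their values on [-r,0] matter.\<close>

definition C1 :: "real \<Rightarrow> (real \<Rightarrow> real) set" where
  "C1 r = {\<phi>. \<exists>\<phi>'. continuous_on {-r..0} \<phi>' \<and>
      (\<forall>s\<in>{-r..0}. (\<phi> has_real_derivative \<phi>' s) (at s within {-r..0}))}"

definition dseg :: "real \<Rightarrow> (real \<Rightarrow> real) \<Rightarrow> real \<Rightarrow> real" where
  "dseg r \<phi> s = vector_derivative \<phi> (at s within {-r..0})"

definition norm1 :: "real \<Rightarrow> (real \<Rightarrow> real) \<Rightarrow> real" where
  "norm1 r \<phi> = (SUP s\<in>{-r..0}. \<bar>\<phi> s\<bar>) + (SUP s\<in>{-r..0}. \<bar>dseg r \<phi> s\<bar>)"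

definition seg :: "(real \<Rightarrow> real) \<Rightarrow> real \<Rightarrow> (real \<Rightarrow> real)" where
  "seg x t = (\<lambda>s. x (t + s))"

definition delay :: "(real \<Rightarrow> real) \<Rightarrow> real \<Rightarrow> real \<Rightarrow> (real \<Rightarrow> real) \<Rightarrow> real" where
  "delay v a r \<phi> = (THE u. u \<in> {0<..<r} \<and> a = integral {-u..0} (\<lambda>s. v (\<phi> s)))"

definition Gfun :: "real \<Rightarrow> real \<Rightarrow> real \<Rightarrow> real \<Rightarrow> real \<Rightarrow> (real \<Rightarrow> real) \<Rightarrow> (real \<Rightarrow> real)
    \<Rightarrow> (real \<Rightarrow> real) \<Rightarrow> real" where
  "Gfun \<beta> \<mu> \<gamma> a r g v \<phi> =
     (let d = delay v a r \<phi> in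
       \<beta> * exp (- \<mu> * d) * (v (\<phi> 0) / v (\<phi> (- d))) * g (\<phi> (- d)) - \<gamma> * \<phi> 0)"

definition XG :: "real \<Rightarrow> real \<Rightarrow> real \<Rightarrow> real \<Rightarrow> real \<Rightarrow> (real \<Rightarrow> real) \<Rightarrow> (real \<Rightarrow> real)
    \<Rightarrow> (real \<Rightarrow> real) set" where
  "XG \<beta> \<mu> \<gamma> a r g v = {\<phi> \<in> C1 r. dseg r \<phi> 0 = Gfun \<beta> \<mu> \<gamma> a r g v \<phi>}"

definition is_solution :: "real \<Rightarrow> real \<Rightarrow> real \<Rightarrow> real \<Rightarrow> real \<Rightarrow> (real \<Rightarrow> real) \<Rightarrow> (real \<Rightarrow> real)
    \<Rightarrow> (real \<Rightarrow> real) \<Rightarrow> (real \<Rightarrow> real) \<Rightarrow> bool" where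
  "is_solution \<beta> \<mu> \<gamma> a r g v \<phi> x \<longleftrightarrow>
     (\<forall>s\<in>{-r..0}. x s = \<phi> s) \<and>
     (\<exists>x'. continuous_on {-r..} x' \<and>
        (\<forall>t\<in>{-r..}. (x has_real_derivative x' t) (at t within {-r..}))) \<and>
     (\<forall>t>0. (x has_real_derivative Gfun \<beta> \<mu> \<gamma> a r g v (seg x t)) (at t))"

definition open_in_XG :: "real \<Rightarrow> (real \<Rightarrow> real) set \<Rightarrow> (real \<Rightarrow> real) set \<Rightarrow> bool" where
  "open_in_XG r X B \<longleftrightarrow> B \<subseteq> X \<and>
     (\<forall>\<phi>\<in>B. \<exists>e>0. \<forall>\<psi>\<in>X. norm1 r (\<lambda>s. \<psi> s - \<phi> s) < e \<longrightarrow> \<psi> \<in> B)"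

definition bounded1 :: "real \<Rightarrow> (real \<Rightarrow> real) set \<Rightarrow> bool" where
  "bounded1 r B \<longleftrightarrow> (\<exists>M. \<forall>\<phi>\<in>B. norm1 r \<phi> \<le> M)"

end

theory Submission
  imports Defs
begin

(* Write h(t) = G(x_t) + gamma x(t), so that x' = h - gamma x. Since the delay lies in (0, r) and
   v, g are bounded away from 0 and infinity, h takes values in a fixed interval [m, M] with m > 0,
   whatever the solution. Comparison with the linear equation then confines x(t), after a time
   depending only on x(0), to (m/(2 gamma), (M+m)/gamma), and in turn |x'| = |h - gamma x| < M.
   The set of phi in X_G satisfying these three strict bounds on [-r, 0] is open (a continuous
   margin attains a positive minimum on the compact interval), bounded and positive, and
   absorbs every trajectory. *)

lemma dseg_eqI:
  assumes "r > 0" "s \<in> {-r..0}" "(\<phi> has_real_derivative D) (at s within {-r..0})"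
  shows "dseg r \<phi> s = D"
  using assms unfolding dseg_def
  by (intro vector_derivative_within_closed_interval)
    (auto simp: has_real_derivative_iff_has_vector_derivative)

lemma C1_dsegD:
  assumes "r > 0" "\<phi> \<in> C1 r"
  shows "continuous_on {-r..0} (dseg r \<phi>)"
    and "\<forall>s\<in>{-r..0}. (\<phi> has_real_derivative dseg r \<phi> s) (at s within {-r..0})"
proof -
  from \<open>\<phi> \<in> C1 r\<close> obtain \<phi>' where cont: "continuous_on {-r..0} \<phi>'"
    and deriv: "\<forall>s\<in>{-r..0}. (\<phi> has_real_derivative \<phi>' s) (at s within {-r..0})"
    unfolding C1_def by blast
  have "\<forall>s\<in>{-r..0}. dseg r \<phi> s = \<phi>' s"
    using deriv dseg_eqI[OF \<open>r > 0\<close>] by blast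
  then show "continuous_on {-r..0} (dseg r \<phi>)"
    "\<forall>s\<in>{-r..0}. (\<phi> has_real_derivative dseg r \<phi> s) (at s within {-r..0})"
    using continuous_on_eq[OF cont] deriv by auto
qed

lemma C1_continuous_on: "\<phi> \<in> C1 r \<Longrightarrow> continuous_on {-r..0} \<phi>"
  unfolding C1_def by (auto intro: DERIV_continuous_on)

lemma C1_diff:
  assumes "r > 0" "\<phi> \<in> C1 r" "\<psi> \<in> C1 r"
  shows "(\<lambda>s. \<psi> s - \<phi> s) \<in> C1 r"
    and "\<forall>s\<in>{-r..0}. dseg r (\<lambda>s. \<psi> s - \<phi> s) s = dseg r \<psi> s - dseg r \<phi> s"
proof -
  have deriv: "((\<lambda>s. \<psi> s - \<phi> s) has_real_derivative dseg r \<psi> s - dseg r \<phi> s)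
      (at s within {-r..0})" if "s \<in> {-r..0}" for s
    using C1_dsegD(2)[OF assms(1,2)] C1_dsegD(2)[OF assms(1,3)] that by (intro DERIV_diff) auto
  moreover have "continuous_on {-r..0} (\<lambda>s. dseg r \<psi> s - dseg r \<phi> s)"
    using C1_dsegD(1)[OF assms(1,2)] C1_dsegD(1)[OF assms(1,3)] by (intro continuous_intros)
  ultimately show "(\<lambda>s. \<psi> s - \<phi> s) \<in> C1 r"
    unfolding C1_def by blast
  show "\<forall>s\<in>{-r..0}. dseg r (\<lambda>s. \<psi> s - \<phi> s) s = dseg r \<psi> s - dseg r \<phi> s"
    using deriv by (simp add: dseg_eqI[OF \<open>r > 0\<close>])
qed

lemma abs_le_norm1:
  assumes "r > 0" "\<phi> \<in> C1 r" "s \<in> {-r..0}"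
  shows "\<bar>\<phi> s\<bar> \<le> norm1 r \<phi>" and "\<bar>dseg r \<phi> s\<bar> \<le> norm1 r \<phi>"
proof -
  have sup_ge: "\<bar>f s\<bar> \<le> (SUP s\<in>{-r..0}. \<bar>f s\<bar>)" if "continuous_on {-r..0} f" for f :: "real \<Rightarrow> real"
  proof (rule cSUP_upper[OF \<open>s \<in> {-r..0}\<close>])
    have "compact ((\<lambda>s. \<bar>f s\<bar>) ` {-r..0})"
      using that by (intro compact_continuous_image continuous_intros) auto
    then show "bdd_above ((\<lambda>s. \<bar>f s\<bar>) ` {-r..0})"
      by (simp add: bounded_imp_bdd_above compact_imp_bounded)
  qed
  have "\<bar>\<phi> s\<bar> \<le> (SUP s\<in>{-r..0}. \<bar>\<phi> s\<bar>)"
    using sup_ge C1_continuous_on[OF assms(2)] .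
  moreover have "\<bar>dseg r \<phi> s\<bar> \<le> (SUP s\<in>{-r..0}. \<bar>dseg r \<phi> s\<bar>)"
    using sup_ge C1_dsegD(1)[OF assms(1,2)] .
  moreover have "0 \<le> \<bar>\<phi> s\<bar>" "0 \<le> \<bar>dseg r \<phi> s\<bar>"
    by simp_all
  ultimately show "\<bar>\<phi> s\<bar> \<le> norm1 r \<phi>" "\<bar>dseg r \<phi> s\<bar> \<le> norm1 r \<phi>"
    unfolding norm1_def by linarith+
qed

lemma norm1_le:
  assumes "r \<ge> 0" "\<forall>s\<in>{-r..0}. \<bar>\<phi> s\<bar> \<le> A \<and> \<bar>dseg r \<phi> s\<bar> \<le> K"
  shows "norm1 r \<phi> \<le> A + K"
proof -
  have "{-r..0} \<noteq> {}" using assms(1) by simp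
  then have "(SUP s\<in>{-r..0}. \<bar>\<phi> s\<bar>) \<le> A" "(SUP s\<in>{-r..0}. \<bar>dseg r \<phi> s\<bar>) \<le> K"
    using assms(2) by (auto intro!: cSUP_least)
  then show ?thesis unfolding norm1_def by linarith
qed

lemma seg_in_C1:
  assumes "t \<ge> 0" "continuous_on {-r..} x'"
    and "\<forall>\<tau>\<in>{-r..}. (x has_real_derivative x' \<tau>) (at \<tau> within {-r..})"
  shows "seg x t \<in> C1 r"
  unfolding C1_def
proof (intro CollectI exI conjI ballI)
  show "continuous_on {-r..0} (\<lambda>s. x' (t + s))"
    using assms(1) by (intro continuous_on_compose2[OF assms(2)] continuous_intros) auto
  fix s assume s: "s \<in> {-r..0}"
  have img: "(\<lambda>s. t + s) ` {-r..0} \<subseteq> {-r..}" using assms(1) by auto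
  have "(x has_real_derivative x' (t + s)) (at (t + s) within (\<lambda>s. t + s) ` {-r..0})"
    using assms(1,3) s by (intro DERIV_subset[OF _ img]) auto
  moreover have "((\<lambda>s. t + s) has_real_derivative 1) (at s within {-r..0})"
    by (auto intro!: derivative_eq_intros)
  ultimately have "(x \<circ> (\<lambda>s. t + s) has_real_derivative x' (t + s) * 1) (at s within {-r..0})"
    by (rule DERIV_image_chain)
  then show "(seg x t has_real_derivative x' (t + s)) (at s within {-r..0})"
    unfolding seg_def o_def by simp
qed

lemma dseg_seg:
  assumes "r > 0" "s \<in> {-r..0}" "(x has_real_derivative D) (at (t + s))"
  shows "dseg r (seg x t) s = D"
proof (rule dseg_eqI[OF assms(1,2)])
  have "((\<lambda>s. x (t + s)) has_real_derivative D) (at s)"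
    using DERIV_shift[of x D s t] assms(3) by (simp add: add.commute)
  then show "(seg x t has_real_derivative D) (at s within {-r..0})"
    unfolding seg_def by (rule has_field_derivative_at_within)
qed

lemma integral_lower_limit_growth:
  fixes f :: "real \<Rightarrow> real"
  assumes "continuous_on {-r..0} f" "\<forall>s\<in>{-r..0}. c \<le> f s" "0 \<le> p" "p \<le> q" "q \<le> r"
  shows "integral {-p..0} f + c * (q - p) \<le> integral {-q..0} f"
proof -
  have int: "f integrable_on {-q..0}"
    using assms(1,5) by (intro integrable_continuous_interval continuous_on_subset[OF assms(1)]) auto
  have "integral {-q..-p} f + integral {-p..0} f = integral {-q..0} f"
    using assms(3,4) int by (intro Henstock_Kurzweil_Integration.integral_combine) auto
  moreover have "integral {-q..-p} (\<lambda>_. c) \<le> integral {-q..-p} f"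
    using assms(2-5) integrable_on_subinterval[OF int, of "-q" "-p"] by (intro integral_le) auto
  ultimately show ?thesis
    using assms(4) by (simp add: mult.commute)
qed

lemma ex1_left_endpoint_integral_eq:
  fixes f :: "real \<Rightarrow> real"
  assumes "continuous_on {-r..0} f" "\<forall>s\<in>{-r..0}. c \<le> f s" "c > 0" "0 < a" "a < c * r"
  shows "\<exists>!u. u \<in> {0<..<r} \<and> a = integral {-u..0} f"
proof -
  define F where "F u = integral {-u..0} f" for u
  have "0 < c * r"
    using assms(4,5) by linarith
  then have r: "r > 0"
    using assms(3) by (simp add: zero_less_mult_iff)
  have growth: "F p + c * (q - p) \<le> F q" if "0 \<le> p" "p \<le> q" "q \<le> r" for p q
    unfolding F_def using integral_lower_limit_growth[OF assms(1,2) that] .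
  have "continuous_on {0..r} F"
  proof -
    have "continuous_on {-r..0} (\<lambda>u. integral {u..0} f)"
      using assms(1) by (intro indefinite_integral_continuous_1' integrable_continuous_interval)
    then show ?thesis
      unfolding F_def by (rule continuous_on_compose2[of _ _ _ uminus]) (auto intro: continuous_intros)
  qed
  moreover have "F 0 = 0" "c * r \<le> F r"
    using growth[of 0 r] r by (auto simp: F_def)
  ultimately obtain u where u: "0 \<le> u" "u \<le> r" "F u = a"
    using IVT'[of F 0 a r] r assms(4,5) by force
  with \<open>F 0 = 0\<close> \<open>c * r \<le> F r\<close> assms(4,5) have "u \<in> {0<..<r}"
    by (cases "u = 0"; cases "u = r") auto
  moreover have "w = u" if "w \<in> {0<..<r}" "a = F w" for w
    using growth[of u w] growth[of w u] u that assms(3)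
    by (smt (verit) greaterThanLessThan_iff mult_pos_pos)
  ultimately show ?thesis
    using u unfolding F_def by metis
qed

lemma delay_in_interval:
  fixes v :: "real \<Rightarrow> real"
  assumes "continuous_on {-r..0} \<phi>" "continuous_on UNIV v" "\<forall>x. v0 \<le> v x"
    and "0 < v0" "0 < a" "a / v0 < r"
  shows "delay v a r \<phi> \<in> {0<..<r}"
proof -
  have "\<exists>!u. u \<in> {0<..<r} \<and> a = integral {-u..0} (\<lambda>s. v (\<phi> s))"
    using assms
    by (intro ex1_left_endpoint_integral_eq[where c = v0] continuous_on_compose2[OF assms(2,1)])
      (auto simp: field_simps)
  from theI'[OF this] show ?thesis
    unfolding delay_def by blast
qed

lemma Gfun_feedback_bounds:
  fixes v g :: "real \<Rightarrow> real"
  assumes "continuous_on {-r..0} \<phi>" "continuous_on UNIV v"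
    and "\<forall>x. v0 \<le> v x \<and> v x \<le> vU" "\<forall>x. c \<le> g x \<and> g x \<le> C"
    and "0 < v0" "0 < c" "0 < \<beta>" "0 \<le> \<mu>" "0 < a" "a / v0 < r"
  shows "\<beta> * exp (- \<mu> * r) * (v0 / vU) * c \<le> Gfun \<beta> \<mu> \<gamma> a r g v \<phi> + \<gamma> * \<phi> 0"
    and "Gfun \<beta> \<mu> \<gamma> a r g v \<phi> + \<gamma> * \<phi> 0 \<le> \<beta> * (vU / v0) * C"
proof -
  define d where "d = delay v a r \<phi>"
  have "0 < d" "d < r"
    using delay_in_interval[OF assms(1,2) _ assms(5,9,10)] assms(3) unfolding d_def by auto
  define Q where "Q = v (\<phi> 0) / v (\<phi> (- d))"
  have eq: "Gfun \<beta> \<mu> \<gamma> a r g v \<phi> + \<gamma> * \<phi> 0 = \<beta> * (exp (- \<mu> * d) * Q * g (\<phi> (- d)))"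
    unfolding Gfun_def Let_def Q_def d_def by simp
  have v_pos: "0 < v x" for x
    using assms(3,5) by (meson less_le_trans)
  have g_pos: "0 < g x" for x
    using assms(4,6) by (meson less_le_trans)
  have "exp (- \<mu> * r) \<le> exp (- \<mu> * d)" "exp (- \<mu> * d) \<le> 1"
    using \<open>0 < d\<close> \<open>d < r\<close> assms(8) by (auto simp: mult_left_mono)
  moreover have "v0 / vU \<le> Q"
    unfolding Q_def by (rule frac_le) (use assms(3) v_pos in \<open>auto intro: less_imp_le\<close>)
  moreover have "Q \<le> vU / v0"
    unfolding Q_def by (rule frac_le) (use assms(3,5) v_pos in \<open>auto intro: less_imp_le\<close>)
  moreover have "0 \<le> v0 / vU"
    using assms(3,5) by (meson divide_nonneg_nonneg less_imp_le order_trans)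
  ultimately have lower: "exp (- \<mu> * r) * (v0 / vU) * c \<le> exp (- \<mu> * d) * Q * g (\<phi> (- d))"
    and upper: "exp (- \<mu> * d) * Q * g (\<phi> (- d)) \<le> 1 * (vU / v0) * C"
    using assms(4,6) g_pos by (intro mult_mono; simp add: less_imp_le)+
  from mult_left_mono[OF lower, of \<beta>] mult_left_mono[OF upper, of \<beta>] assms(7)
  show "\<beta> * exp (- \<mu> * r) * (v0 / vU) * c \<le> Gfun \<beta> \<mu> \<gamma> a r g v \<phi> + \<gamma> * \<phi> 0"
    "Gfun \<beta> \<mu> \<gamma> a r g v \<phi> + \<gamma> * \<phi> 0 \<le> \<beta> * (vU / v0) * C"
    unfolding eq by (simp_all add: mult.assoc)
qed

lemma linear_ode_upper_bound:
  fixes x h :: "real \<Rightarrow> real"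
  assumes "continuous_on {0..} x"
    and "\<And>t. t > 0 \<Longrightarrow> (x has_real_derivative h t - \<gamma> * x t) (at t)"
    and "\<And>t. t > 0 \<Longrightarrow> h t \<le> M" and "\<gamma> \<noteq> 0" and "t \<ge> 0"
  shows "x t \<le> M / \<gamma> + (x 0 - M / \<gamma>) * exp (- \<gamma> * t)"
proof -
  define y where "y t = exp (\<gamma> * t) * (x t - M / \<gamma>)" for t
  have "y t \<le> y 0"
  proof (rule DERIV_nonpos_imp_decreasing_open[OF \<open>t \<ge> 0\<close>])
    fix \<tau> :: real assume "0 < \<tau>"
    then have "(y has_real_derivative exp (\<gamma> * \<tau>) * (h \<tau> - M)) (at \<tau>)"
      unfolding y_def using assms(4)
      by (auto intro!: derivative_eq_intros assms(2) simp: field_simps)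
    moreover have "exp (\<gamma> * \<tau>) * (h \<tau> - M) \<le> 0"
      using assms(3)[OF \<open>0 < \<tau>\<close>] by (simp add: mult_nonneg_nonpos)
    ultimately show "\<exists>D. (y has_real_derivative D) (at \<tau>) \<and> D \<le> 0" by blast
  next
    show "continuous_on {0..t} y"
      unfolding y_def using assms(1) by (auto intro!: continuous_intros elim: continuous_on_subset)
  qed
  then show ?thesis
    unfolding y_def by (simp add: exp_minus field_simps)
qed

definition C1_box :: "real \<Rightarrow> real \<Rightarrow> real \<Rightarrow> real \<Rightarrow> (real \<Rightarrow> real) set" where
  "C1_box r lo hi K = {\<phi>. \<forall>s\<in>{-r..0}. lo < \<phi> s \<and> \<phi> s < hi \<and> \<bar>dseg r \<phi> s\<bar> < K}"

lemma open_in_XG_Int_C1_box: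
  assumes "r > 0" "X \<subseteq> C1 r"
  shows "open_in_XG r X (X \<inter> C1_box r lo hi K)"
  unfolding open_in_XG_def
proof (intro conjI ballI)
  fix \<phi> assume \<phi>: "\<phi> \<in> X \<inter> C1_box r lo hi K"
  then have "\<phi> \<in> C1 r" using assms(2) by blast
  define margin where
    "margin s = min (\<phi> s - lo) (min (hi - \<phi> s) (K - \<bar>dseg r \<phi> s\<bar>))" for s
  have "continuous_on {-r..0} margin"
    unfolding margin_def
    using C1_continuous_on[OF \<open>\<phi> \<in> C1 r\<close>] C1_dsegD(1)[OF assms(1) \<open>\<phi> \<in> C1 r\<close>]
    by (intro continuous_intros)
  then obtain s0 where s0: "s0 \<in> {-r..0}" "\<forall>s\<in>{-r..0}. margin s0 \<le> margin s"
    using continuous_attains_inf[OF compact_Icc _ \<open>continuous_on {-r..0} margin\<close>] assms(1)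
    by auto
  show "\<exists>e>0. \<forall>\<psi>\<in>X. norm1 r (\<lambda>s. \<psi> s - \<phi> s) < e \<longrightarrow> \<psi> \<in> X \<inter> C1_box r lo hi K"
  proof (intro exI conjI ballI impI)
    show "margin s0 > 0"
      using \<phi> s0(1) unfolding margin_def C1_box_def by auto
    fix \<psi> assume "\<psi> \<in> X" and close: "norm1 r (\<lambda>s. \<psi> s - \<phi> s) < margin s0"
    then have "\<psi> \<in> C1 r" using assms(2) by blast
    have "lo < \<psi> s \<and> \<psi> s < hi \<and> \<bar>dseg r \<psi> s\<bar> < K" if s: "s \<in> {-r..0}" for s
    proof -
      note diff = C1_diff[OF assms(1) \<open>\<phi> \<in> C1 r\<close> \<open>\<psi> \<in> C1 r\<close>]
      have "\<bar>\<psi> s - \<phi> s\<bar> < margin s" "\<bar>dseg r \<psi> s - dseg r \<phi> s\<bar> < margin s"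
        using abs_le_norm1[OF assms(1) diff(1) s] diff(2) s close s0(2) by fastforce+
      then show ?thesis
        unfolding margin_def by linarith
    qed
    then show "\<psi> \<in> X \<inter> C1_box r lo hi K"
      using \<open>\<psi> \<in> X\<close> unfolding C1_box_def by blast
  qed
qed auto

lemma bounded1_subset_C1_box:
  assumes "r \<ge> 0" "B \<subseteq> C1_box r lo hi K"
  shows "bounded1 r B"
  unfolding bounded1_def
proof (intro exI ballI)
  fix \<phi> assume "\<phi> \<in> B"
  with assms(2) have "\<forall>s\<in>{-r..0}. \<bar>\<phi> s\<bar> \<le> max \<bar>lo\<bar> \<bar>hi\<bar> \<and> \<bar>dseg r \<phi> s\<bar> \<le> K"
    unfolding C1_box_def by fastforce
  then show "norm1 r \<phi> \<le> max \<bar>lo\<bar> \<bar>hi\<bar> + K"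
    using norm1_le[OF assms(1)] by blast
qed

lemma solution_seg_in_C1:
  assumes "is_solution \<beta> \<mu> \<gamma> a r g v \<phi> x" "t \<ge> 0"
  shows "seg x t \<in> C1 r"
  using assms seg_in_C1 unfolding is_solution_def by blast

lemma solution_seg_in_XG:
  assumes "r > 0" "is_solution \<beta> \<mu> \<gamma> a r g v \<phi> x" "t > 0"
  shows "seg x t \<in> XG \<beta> \<mu> \<gamma> a r g v"
proof -
  have "(x has_real_derivative Gfun \<beta> \<mu> \<gamma> a r g v (seg x t)) (at (t + 0))"
    using assms(2,3) unfolding is_solution_def by simp
  then show ?thesis
    using solution_seg_in_C1[OF assms(2)] assms(1,3) dseg_seg[of r 0]
    unfolding XG_def by auto
qed

lemma solution_bounds:
  assumes "r \<ge> 0" "\<gamma> \<noteq> 0" "is_solution \<beta> \<mu> \<gamma> a r g v \<phi> x"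
    and feedback: "\<And>\<psi>. continuous_on {-r..0} \<psi> \<Longrightarrow>
      m \<le> Gfun \<beta> \<mu> \<gamma> a r g v \<psi> + \<gamma> * \<psi> 0 \<and> Gfun \<beta> \<mu> \<gamma> a r g v \<psi> + \<gamma> * \<psi> 0 \<le> M"
    and "t \<ge> 0"
  shows "m / \<gamma> + (\<phi> 0 - m / \<gamma>) * exp (- \<gamma> * t) \<le> x t"
    and "x t \<le> M / \<gamma> + (\<phi> 0 - M / \<gamma>) * exp (- \<gamma> * t)"
proof -
  define h where "h \<tau> = Gfun \<beta> \<mu> \<gamma> a r g v (seg x \<tau>) + \<gamma> * x \<tau>" for \<tau>
  have h: "m \<le> h \<tau> \<and> h \<tau> \<le> M" if "\<tau> \<ge> 0" for \<tau>
    using feedback[OF C1_continuous_on[OF solution_seg_in_C1[OF assms(3) that]]]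
    unfolding h_def by (simp add: seg_def)
  have deriv: "(x has_real_derivative h \<tau> - \<gamma> * x \<tau>) (at \<tau>)" if "\<tau> > 0" for \<tau>
    using assms(3) that unfolding is_solution_def h_def by simp
  have "continuous_on {-r..} x"
    using assms(3) unfolding is_solution_def by (blast intro: DERIV_continuous_on)
  then have cont: "continuous_on {0..} x"
    by (rule continuous_on_subset) (use assms(1) in auto)
  have "x 0 = \<phi> 0"
    using assms(1,3) unfolding is_solution_def by auto
  moreover have "- x t \<le> (- m) / \<gamma> + (- x 0 - (- m) / \<gamma>) * exp (- \<gamma> * t)"
    using DERIV_minus[OF deriv] h assms(2,5)
    by (intro linear_ode_upper_bound[where h = "\<lambda>\<tau>. - h \<tau>"] continuous_intros cont) auto
  moreover have "x t \<le> M / \<gamma> + (x 0 - M / \<gamma>) * exp (- \<gamma> * t)"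
    using deriv h assms(2,5) by (intro linear_ode_upper_bound[OF cont]) auto
  ultimately show "m / \<gamma> + (\<phi> 0 - m / \<gamma>) * exp (- \<gamma> * t) \<le> x t"
    "x t \<le> M / \<gamma> + (\<phi> 0 - M / \<gamma>) * exp (- \<gamma> * t)"
    by (simp_all add: field_simps)
qed

lemma eventually_exp_decay_less:
  fixes \<gamma> \<epsilon> c :: real
  assumes "\<gamma> > 0" "\<epsilon> > 0"
  shows "\<forall>\<^sub>F t in at_top. \<bar>c * exp (- \<gamma> * t)\<bar> < \<epsilon>"
proof -
  have "LIM t at_top. - \<gamma> * t :> at_bot"
    using assms(1) by (intro filterlim_tendsto_neg_mult_at_bot[OF tendsto_const _ filterlim_ident]) simp
  then have "((\<lambda>t. c * exp (- \<gamma> * t)) \<longlongrightarrow> c * 0) at_top"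
    by (intro tendsto_mult tendsto_const filterlim_compose[OF exp_at_bot])
  from tendstoD[OF this assms(2)] show ?thesis
    by (simp add: dist_real_def)
qed

lemma solutions_eventually_bounded:
  assumes "r > 0" "\<gamma> > 0" "m > 0"
    and feedback: "\<And>\<psi>. continuous_on {-r..0} \<psi> \<Longrightarrow>
      m \<le> Gfun \<beta> \<mu> \<gamma> a r g v \<psi> + \<gamma> * \<psi> 0 \<and> Gfun \<beta> \<mu> \<gamma> a r g v \<psi> + \<gamma> * \<psi> 0 \<le> M"
  shows "\<exists>T>0. \<forall>x. is_solution \<beta> \<mu> \<gamma> a r g v \<phi> x \<longrightarrow> (\<forall>\<tau>\<ge>T.
           m / (2 * \<gamma>) < x \<tau> \<and> x \<tau> < (M + m) / \<gamma> \<and> \<bar>Gfun \<beta> \<mu> \<gamma> a r g v (seg x \<tau>)\<bar> < M)"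
proof -
  have "\<forall>\<^sub>F \<tau> in at_top. 0 < \<tau> \<and> \<bar>(\<phi> 0 - m / \<gamma>) * exp (- \<gamma> * \<tau>)\<bar> < m / (2 * \<gamma>)
      \<and> \<bar>(\<phi> 0 - M / \<gamma>) * exp (- \<gamma> * \<tau>)\<bar> < m / \<gamma>"
    using assms(2,3) by (intro eventually_conj eventually_gt_at_top eventually_exp_decay_less) auto
  then obtain T where T: "\<And>\<tau>. \<tau> \<ge> T \<Longrightarrow> 0 < \<tau> \<and> \<bar>(\<phi> 0 - m / \<gamma>) * exp (- \<gamma> * \<tau>)\<bar> < m / (2 * \<gamma>)
      \<and> \<bar>(\<phi> 0 - M / \<gamma>) * exp (- \<gamma> * \<tau>)\<bar> < m / \<gamma>"
    unfolding eventually_at_top_linorder by blast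
  have "T > 0"
    using T[of T] by blast
  moreover have "m / (2 * \<gamma>) < x \<tau> \<and> x \<tau> < (M + m) / \<gamma> \<and> \<bar>Gfun \<beta> \<mu> \<gamma> a r g v (seg x \<tau>)\<bar> < M"
    if sol: "is_solution \<beta> \<mu> \<gamma> a r g v \<phi> x" and "T \<le> \<tau>" for x \<tau>
  proof -
    have "0 < \<tau>"
      using T \<open>T \<le> \<tau>\<close> by blast
    have "m / \<gamma> + (\<phi> 0 - m / \<gamma>) * exp (- \<gamma> * \<tau>) \<le> x \<tau>"
      "x \<tau> \<le> M / \<gamma> + (\<phi> 0 - M / \<gamma>) * exp (- \<gamma> * \<tau>)"
      using solution_bounds[OF _ _ sol feedback] assms(1,2) \<open>0 < \<tau>\<close> by auto
    moreover have "(M + m) / \<gamma> = M / \<gamma> + m / \<gamma>" "m / (2 * \<gamma>) = m / \<gamma> - m / (2 * \<gamma>)"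
      using assms(2) by (simp_all add: field_simps)
    ultimately have x: "m / (2 * \<gamma>) < x \<tau>" "x \<tau> < (M + m) / \<gamma>"
      using T[OF \<open>T \<le> \<tau>\<close>] unfolding abs_less_iff by linarith+
    have "m \<le> Gfun \<beta> \<mu> \<gamma> a r g v (seg x \<tau>) + \<gamma> * x \<tau>"
      "Gfun \<beta> \<mu> \<gamma> a r g v (seg x \<tau>) + \<gamma> * x \<tau> \<le> M"
      using feedback[OF C1_continuous_on[OF solution_seg_in_C1[OF sol]]] \<open>0 < \<tau>\<close>
      by (auto simp: seg_def)
    moreover have "0 < \<gamma> * x \<tau>" "\<gamma> * x \<tau> < M + m"
      using x assms(2,3) by (auto simp: field_simps)
    ultimately show ?thesis
      using x by (auto simp: abs_less_iff)
  qed
  ultimately show ?thesis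
    by blast
qed

lemma solutions_eventually_in_C1_box:
  assumes "r > 0" "\<gamma> > 0" "m > 0"
    and feedback: "\<And>\<psi>. continuous_on {-r..0} \<psi> \<Longrightarrow>
      m \<le> Gfun \<beta> \<mu> \<gamma> a r g v \<psi> + \<gamma> * \<psi> 0 \<and> Gfun \<beta> \<mu> \<gamma> a r g v \<psi> + \<gamma> * \<psi> 0 \<le> M"
  shows "\<exists>T\<ge>0. \<forall>x. is_solution \<beta> \<mu> \<gamma> a r g v \<phi> x \<longrightarrow>
           (\<forall>t\<ge>T. seg x t \<in> XG \<beta> \<mu> \<gamma> a r g v \<inter> C1_box r (m / (2 * \<gamma>)) ((M + m) / \<gamma>) M)"
proof -
  obtain T where "T > 0" and T: "\<And>x \<tau>. is_solution \<beta> \<mu> \<gamma> a r g v \<phi> x \<Longrightarrow> \<tau> \<ge> T \<Longrightarrow>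
      m / (2 * \<gamma>) < x \<tau> \<and> x \<tau> < (M + m) / \<gamma> \<and> \<bar>Gfun \<beta> \<mu> \<gamma> a r g v (seg x \<tau>)\<bar> < M"
    using solutions_eventually_bounded[OF assms] by blast
  show ?thesis
  proof (intro exI[of _ "T + r"] conjI allI impI)
    show "T + r \<ge> 0"
      using \<open>T > 0\<close> assms(1) by linarith
    fix x t assume sol: "is_solution \<beta> \<mu> \<gamma> a r g v \<phi> x" and "T + r \<le> t"
    have "seg x t \<in> C1_box r (m / (2 * \<gamma>)) ((M + m) / \<gamma>) M"
      unfolding C1_box_def
    proof (intro CollectI ballI)
      fix s assume s: "s \<in> {-r..0}"
      with \<open>T + r \<le> t\<close> have "t + s \<ge> T" by auto
      with \<open>T > 0\<close> sol have "(x has_real_derivative Gfun \<beta> \<mu> \<gamma> a r g v (seg x (t + s))) (at (t + s))"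
        unfolding is_solution_def by auto
      then show "m / (2 * \<gamma>) < seg x t s \<and> seg x t s < (M + m) / \<gamma> \<and> \<bar>dseg r (seg x t) s\<bar> < M"
        using T[OF sol \<open>t + s \<ge> T\<close>] dseg_seg[OF assms(1) s] by (simp add: seg_def)
    qed
    moreover have "seg x t \<in> XG \<beta> \<mu> \<gamma> a r g v"
      using solution_seg_in_XG[OF assms(1) sol] \<open>T > 0\<close> \<open>T + r \<le> t\<close> assms(1) by auto
    ultimately show "seg x t \<in> XG \<beta> \<mu> \<gamma> a r g v \<inter> C1_box r (m / (2 * \<gamma>)) ((M + m) / \<gamma>) M"
      by blast
  qed
qed

theorem corollary3p3:
  fixes \<beta> \<mu> \<gamma> a r v0 vU :: real and g v :: "real \<Rightarrow> real"
  assumes "\<beta> > 0" "\<mu> > 0" "\<gamma> > 0" "a > 0"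
    and "\<exists>g'. continuous_on UNIV g' \<and> (\<forall>x. (g has_real_derivative g' x) (at x))"
    and "\<exists>c C. 0 < c \<and> (\<forall>x. c \<le> g x \<and> g x \<le> C)"
    and "\<exists>v'. continuous_on UNIV v' \<and> (\<forall>x. (v has_real_derivative v' x) (at x))"
    and "0 < v0" "\<forall>x. v0 \<le> v x \<and> v x \<le> vU"
    and "r > a / v0"
  shows "\<exists>B. open_in_XG r (XG \<beta> \<mu> \<gamma> a r g v) B \<and> bounded1 r B \<and>
           (\<forall>\<phi>\<in>B. \<forall>t\<in>{-r..0}. \<phi> t > 0) \<and>
           (\<forall>\<phi>\<in>XG \<beta> \<mu> \<gamma> a r g v. \<exists>T\<ge>0. \<forall>x. is_solution \<beta> \<mu> \<gamma> a r g v \<phi> x \<longrightarrow>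
              (\<forall>t\<ge>T. seg x t \<in> B))"
proof -
  obtain c C where c: "0 < c" "\<forall>x. c \<le> g x \<and> g x \<le> C"
    using assms(6) by blast
  have v_cont: "continuous_on UNIV v"
    using assms(7) by (blast intro: DERIV_continuous_on)
  have "r > 0" "vU > 0"
    using assms(4,8,10) assms(9)[rule_format, of 0] by (smt (verit) divide_pos_pos)+
  define m where "m = \<beta> * exp (- \<mu> * r) * (v0 / vU) * c"
  define M where "M = \<beta> * (vU / v0) * C"
  have "m > 0"
    unfolding m_def using assms(1,8) c(1) \<open>vU > 0\<close> by simp
  have feedback: "m \<le> Gfun \<beta> \<mu> \<gamma> a r g v \<psi> + \<gamma> * \<psi> 0 \<and> Gfun \<beta> \<mu> \<gamma> a r g v \<psi> + \<gamma> * \<psi> 0 \<le> M"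
    if "continuous_on {-r..0} \<psi>" for \<psi>
    using Gfun_feedback_bounds[OF that v_cont assms(9) c(2) assms(8) c(1) assms(1) _ assms(4,10)]
      assms(2) unfolding m_def M_def by auto
  define B where "B = XG \<beta> \<mu> \<gamma> a r g v \<inter> C1_box r (m / (2 * \<gamma>)) ((M + m) / \<gamma>) M"
  have "open_in_XG r (XG \<beta> \<mu> \<gamma> a r g v) B"
    unfolding B_def using \<open>r > 0\<close> by (intro open_in_XG_Int_C1_box) (auto simp: XG_def)
  moreover have "bounded1 r B"
    using \<open>r > 0\<close> by (intro bounded1_subset_C1_box[where B = B]) (auto simp: B_def)
  moreover have "\<forall>\<phi>\<in>B. \<forall>t\<in>{-r..0}. \<phi> t > 0"
    using \<open>m > 0\<close> assms(3) unfolding B_def C1_box_def by (fastforce intro: less_trans[rotated])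
  moreover have "\<exists>T\<ge>0. \<forall>x. is_solution \<beta> \<mu> \<gamma> a r g v \<phi> x \<longrightarrow> (\<forall>t\<ge>T. seg x t \<in> B)" for \<phi>
    unfolding B_def by (rule solutions_eventually_in_C1_box[OF \<open>r > 0\<close> assms(3) \<open>m > 0\<close> feedback])
  ultimately show ?thesis
    by blast
qed

end
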